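(* Let $G$ be an arbitrary group and let $S$ be a nonempty finite subset of $G$. Then every complement $C$ of $S$ in $G$ (i.e. every nonempty $C\subseteq G$ with $SC=G$) contains a minimal complement of $S$ in $G$.
   Context: For nonempty subsets $A,B$ of a group $G$, $AB=\{ab: a\in A, b\in B\}$. A nonempty set $W'\subseteq G$ is a complement to a nonempty set $W\subseteq G$ if $WW'=G$; it is a minimal complement if moreover $W(W'\setminus\{w'\})\neq G$ for every $w'\in W'$, i.e. no proper subset of $W'$ is a complement to $W$. *)

theory Defs
  imports "HOL-Algebra.Group"
begin

definition set_prod :: "('a, 'b) monoid_scheme \<Rightarrow> 'a set \<Rightarrow> 'a set \<Rightarrow> 'a set" where
  "set_prod G A B = {a \<otimes>\<^bsub>G\<^esub> b | a b. a \<in> A \<and> b \<in> B}"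

definition is_complement :: "('a, 'b) monoid_scheme \<Rightarrow> 'a set \<Rightarrow> 'a set \<Rightarrow> bool" where
  "is_complement G W W' \<longleftrightarrow> W' \<noteq> {} \<and> W' \<subseteq> carrier G \<and> set_prod G W W' = carrier G"

definition is_minimal_complement :: "('a, 'b) monoid_scheme \<Rightarrow> 'a set \<Rightarrow> 'a set \<Rightarrow> bool" where
  "is_minimal_complement G W W' \<longleftrightarrow> is_complement G W W' \<and>
     (\<forall>w\<in>W'. set_prod G W (W' - {w}) \<noteq> carrier G)"

end

theory Submission
  imports Defs
begin

text \<open>Apply Zorn's lemma to the complements of \<open>S\<close> inside \<open>C\<close>, ordered by reverse inclusion.
  The intersection of a chain of complements is again a complement: for fixed \<open>g\<close>, the sets
  \<open>{s \<in> S. s\<inverse> g \<in> D}\<close> form a chain of nonempty subsets of the finite set \<open>S\<close>, and its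
  smallest member is contained in all of them, so one \<open>s\<close> serves every \<open>D\<close> of the chain.\<close>

lemma subset_Zorn_Inter_nonempty:
  assumes "\<A> \<noteq> {}" and ch: "\<And>\<C>. \<lbrakk>\<C> \<noteq> {}; subset.chain \<A> \<C>\<rbrakk> \<Longrightarrow> \<Inter>\<C> \<in> \<A>"
  shows "\<exists>M\<in>\<A>. \<forall>X\<in>\<A>. X \<subseteq> M \<longrightarrow> X = M"
proof -
  have "\<exists>M\<in>uminus ` \<A>. \<forall>X\<in>uminus ` \<A>. M \<subseteq> X \<longrightarrow> X = M"
  proof (rule subset_Zorn_nonempty)
    show "uminus ` \<A> \<noteq> {}" using \<open>\<A> \<noteq> {}\<close> by blast
  next
    fix \<C> assume "\<C> \<noteq> {}" and "subset.chain (uminus ` \<A>) \<C>"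
    then have "uminus ` \<C> \<noteq> {}" and "subset.chain \<A> (uminus ` \<C>)"
      by (auto simp: subset_chain_def)
    then have "\<Inter>(uminus ` \<C>) \<in> \<A>" by (rule ch)
    moreover have "\<Union>\<C> = - \<Inter>(uminus ` \<C>)" by auto
    ultimately show "\<Union>\<C> \<in> uminus ` \<A>" by blast
  qed
  then show ?thesis by (metis (no_types, lifting) compl_le_compl_iff double_compl image_iff)
qed

lemma Inter_chain_finite_nonempty:
  assumes "\<K> \<noteq> {}" and "\<And>A. A \<in> \<K> \<Longrightarrow> finite A \<and> A \<noteq> {}"
    and "subset.chain \<A> \<K>"
  shows "\<Inter>\<K> \<noteq> {}"
proof -
  obtain A where "A \<in> \<K>" and A_least: "\<And>B. B \<in> \<K> \<Longrightarrow> card A \<le> card B"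
    using ex_has_least_nat[of "\<lambda>B. B \<in> \<K>" _ card] \<open>\<K> \<noteq> {}\<close> by blast
  have "A \<subseteq> B" if "B \<in> \<K>" for B
  proof (cases "A \<subseteq> B")
    case False
    then have "B \<subseteq> A" using \<open>A \<in> \<K>\<close> \<open>B \<in> \<K>\<close> \<open>subset.chain \<A> \<K>\<close>
      by (auto simp: subset_chain_def)
    then show ?thesis
      using card_subset_eq A_least[OF that] assms(2)[OF \<open>A \<in> \<K>\<close>] card_mono
      by (metis order_antisym subset_refl)
  qed
  then have "A \<subseteq> \<Inter>\<K>" by blast
  then show ?thesis using assms(2)[OF \<open>A \<in> \<K>\<close>] by blast
qed

context group
begin

lemma set_prod_eq_carrier_iff:
  assumes "S \<subseteq> carrier G" and "D \<subseteq> carrier G"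
  shows "set_prod G S D = carrier G \<longleftrightarrow> (\<forall>g\<in>carrier G. \<exists>s\<in>S. inv s \<otimes> g \<in> D)"
proof -
  have "g \<in> set_prod G S D \<longleftrightarrow> (\<exists>s\<in>S. inv s \<otimes> g \<in> D)" if "g \<in> carrier G" for g
  proof
    assume "g \<in> set_prod G S D"
    then obtain s d where "s \<in> S" "d \<in> D" "g = s \<otimes> d" unfolding set_prod_def by blast
    moreover have "s \<in> carrier G" "d \<in> carrier G" using \<open>s \<in> S\<close> \<open>d \<in> D\<close> assms by auto
    ultimately have "inv s \<otimes> g = d" by (simp add: m_assoc[symmetric])
    then show "\<exists>s\<in>S. inv s \<otimes> g \<in> D" using \<open>s \<in> S\<close> \<open>d \<in> D\<close> by blast
  next
    assume "\<exists>s\<in>S. inv s \<otimes> g \<in> D"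
    then obtain s where "s \<in> S" "inv s \<otimes> g \<in> D" by blast
    moreover have "g = s \<otimes> (inv s \<otimes> g)"
      using \<open>s \<in> S\<close> assms that by (auto simp: m_assoc[symmetric])
    ultimately show "g \<in> set_prod G S D" unfolding set_prod_def by blast
  qed
  moreover have "set_prod G S D \<subseteq> carrier G"
    using assms unfolding set_prod_def by auto
  ultimately show ?thesis by blast
qed

lemma is_complement_iff:
  "is_complement G S D \<longleftrightarrow> D \<subseteq> carrier G \<and> set_prod G S D = carrier G"
proof -
  have "set_prod G S {} = {}" by (simp add: set_prod_def)
  then have "set_prod G S D = carrier G \<Longrightarrow> D \<noteq> {}" using one_closed by auto
  then show ?thesis unfolding is_complement_def by blast
qed

lemma is_complement_Inter_chain:
  assumes "finite S" and "S \<subseteq> carrier G" and "\<K> \<noteq> {}"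
    and "\<And>D. D \<in> \<K> \<Longrightarrow> is_complement G S D" and "subset.chain \<A> \<K>"
  shows "is_complement G S (\<Inter>\<K>)"
proof -
  have K_carrier: "\<Inter>\<K> \<subseteq> carrier G"
    using assms(3,4) by (auto simp: is_complement_iff)
  have "\<exists>s\<in>S. inv s \<otimes> g \<in> \<Inter>\<K>" if "g \<in> carrier G" for g
  proof -
    define T where "T D = {s \<in> S. inv s \<otimes> g \<in> D}" for D
    have "\<Inter>(T ` \<K>) \<noteq> {}"
    proof (rule Inter_chain_finite_nonempty)
      show "T ` \<K> \<noteq> {}" using \<open>\<K> \<noteq> {}\<close> by blast
      show "finite A \<and> A \<noteq> {}" if A: "A \<in> T ` \<K>" for A
      proof -
        obtain D where "D \<in> \<K>" and "A = T D" using A by blast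
        have "D \<subseteq> carrier G" and "set_prod G S D = carrier G"
          using assms(4)[OF \<open>D \<in> \<K>\<close>] by (auto simp: is_complement_iff)
        then obtain s where "s \<in> S" and "inv s \<otimes> g \<in> D"
          using set_prod_eq_carrier_iff[OF \<open>S \<subseteq> carrier G\<close>] \<open>g \<in> carrier G\<close> by blast
        then show ?thesis using \<open>A = T D\<close> \<open>finite S\<close> by (auto simp: T_def)
      qed
      show "subset.chain UNIV (T ` \<K>)"
        using \<open>subset.chain \<A> \<K>\<close> by (auto simp: subset_chain_def T_def)
    qed
    then show ?thesis using \<open>\<K> \<noteq> {}\<close> by (auto simp: T_def)
  qed
  then have "set_prod G S (\<Inter>\<K>) = carrier G"
    using set_prod_eq_carrier_iff[OF \<open>S \<subseteq> carrier G\<close> K_carrier] by blast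
  then show ?thesis using K_carrier by (simp add: is_complement_iff)
qed

lemma is_minimal_complementI:
  assumes "is_complement G S M"
    and "\<And>D. \<lbrakk>D \<subseteq> M; is_complement G S D\<rbrakk> \<Longrightarrow> D = M"
  shows "is_minimal_complement G S M"
  unfolding is_minimal_complement_def
proof (intro conjI ballI notI assms(1))
  fix w assume "w \<in> M" and "set_prod G S (M - {w}) = carrier G"
  then have "is_complement G S (M - {w})"
    using assms(1) by (auto simp: is_complement_iff)
  then show False using assms(2)[of "M - {w}"] \<open>w \<in> M\<close> by blast
qed

end

theorem theorem1p1:
  fixes G (structure) and S C :: "'a set"
  assumes "group G"
    and "S \<noteq> {}" and "finite S" and "S \<subseteq> carrier G"
    and "is_complement G S C"
  shows "\<exists>M. M \<subseteq> C \<and> is_minimal_complement G S M"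
proof -
  interpret group G by (rule assms(1))
  define \<A> where "\<A> = {D. D \<subseteq> C \<and> is_complement G S D}"
  have "\<exists>M\<in>\<A>. \<forall>D\<in>\<A>. D \<subseteq> M \<longrightarrow> D = M"
  proof (rule subset_Zorn_Inter_nonempty)
    show "\<A> \<noteq> {}" using assms(5) by (auto simp: \<A>_def)
  next
    fix \<C> assume "\<C> \<noteq> {}" and "subset.chain \<A> \<C>"
    then have "\<C> \<subseteq> \<A>" by (simp add: subset_chain_def)
    then have "is_complement G S (\<Inter>\<C>)"
      using is_complement_Inter_chain[OF assms(3,4) \<open>\<C> \<noteq> {}\<close> _ \<open>subset.chain \<A> \<C>\<close>]
      by (auto simp: \<A>_def)
    moreover have "\<Inter>\<C> \<subseteq> C" using \<open>\<C> \<noteq> {}\<close> \<open>\<C> \<subseteq> \<A>\<close> by (auto simp: \<A>_def)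
    ultimately show "\<Inter>\<C> \<in> \<A>" by (simp add: \<A>_def)
  qed
  then obtain M where "M \<in> \<A>" and M_minimal: "\<forall>D\<in>\<A>. D \<subseteq> M \<longrightarrow> D = M" by blast
  then have "M \<subseteq> C" and "is_complement G S M" by (simp_all add: \<A>_def)
  moreover have "is_minimal_complement G S M"
  proof (rule is_minimal_complementI[OF \<open>is_complement G S M\<close>])
    show "D = M" if "D \<subseteq> M" and "is_complement G S D" for D
      using that \<open>M \<subseteq> C\<close> M_minimal by (simp add: \<A>_def)
  qed
  ultimately show ?thesis by blast
qed

end
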